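(* Let $d$ be a positive even integer, $n=\frac{d^2}{2}$, and $P_m(x)=1+x+\cdots+x^{m-1}\in\mathbb{F}_2[x]$. Then: (1) $P_{d+1}(x)$ is invertible modulo $x^n-1$, with $$P_{d+1}(x)^{-1}\equiv x\big(1+x^{d+1}+x^{2(d+1)}+\cdots+x^{(\frac d2-1)(d+1)}\big)+x^{\frac d2+1}\big(1+x^{d+1}+\cdots+x^{(\frac d2-2)(d+1)}\big)\pmod{x^n-1},$$ and $\mathrm{wt}(P_{d+1}(x)^{-1})=d-1$. (2) Modulo $x^n-1$, $$P_n(x)\equiv P_{d+1}(x)\,x^{\frac d2+1}\big(1+x^{d+1}+\cdots+x^{(\frac d2-2)(d+1)}\big)+\big(1+x+x^2+\cdots+x^{\frac d2}\big)$$ and $$P_n(x)\equiv P_{d+1}(x)^{-1}\big(1+x+\cdots+x^{\frac d2-1}\big)+\big(1+x^{d+1}+x^{2(d+1)}+\cdots+x^{(\frac d2-1)(d+1)}\big).$$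
   Context: Weight is the number of nonzero coefficients of the representative of degree $<n$; an empty sum is $0$. *)

theory Defs
  imports "HOL-Library.Z2" "HOL-Computational_Algebra.Polynomial"
begin

definition Pm :: "nat \<Rightarrow> bit poly" where
  "Pm m = (\<Sum>i<m. monom 1 i)"

definition geom :: "nat \<Rightarrow> nat \<Rightarrow> bit poly" where
  "geom a k = (\<Sum>j<k. monom 1 (j * a))"

definition xn1 :: "nat \<Rightarrow> bit poly" where
  "xn1 n = monom 1 n - 1"

definition wt :: "nat \<Rightarrow> bit poly \<Rightarrow> nat" where
  "wt n f = card {i. coeff (f mod xn1 n) i \<noteq> 0}"

end

theory Submission
  imports Defs
begin

(* Write d = 2k, a = d + 1 = 2k + 1 and n = 2k^2 = (k + 1) + a (k - 1). Everything follows from the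
   block decompositions P_(p+q) = P_p + x^p P_q and P_(a m) = P_a (1 + x^a + ... + x^((m-1) a)).
   Both congruences of (2) are in fact exact polynomial identities, and combining them with
   (1 + x) P_n = 1 + x^n, which needs characteristic 2, gives P_a Q = 1 + (1 + x^n) P_(k+1).
   The exponents of Q are 1 + i a (i < k) and k + 1 + i a (i < k - 1): they are distinct, having
   different residues mod a, and all below n, so Q is its own reduction and has weight 2k - 1. *)

lemma bit_poly_two [simp]: "(2 :: bit poly) = 0"
  by (metis bit_2_eq_0 of_nat_numeral of_nat_poly pCons_0_0)

lemma xn1_eq: "xn1 n = 1 + monom 1 n"
  by (simp add: xn1_def poly_eq_iff)

lemma Pm_add: "Pm (p + q) = Pm p + monom 1 p * Pm q"
  by (induction q) (simp_all add: Pm_def mult_monom algebra_simps)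

lemma geom_Suc: "geom a (Suc k) = geom a k + monom 1 (k * a)"
  by (simp add: geom_def)

lemma Pm_mult: "Pm (a * k) = Pm a * geom a k"
proof (induction k)
  case 0
  show ?case by (simp add: Pm_def geom_def)
next
  case (Suc k)
  have "Pm (a * Suc k) = Pm (a * k) + monom 1 (a * k) * Pm a"
    using Pm_add[of "a * k" a] by (simp add: add.commute)
  then show ?case
    by (simp add: Suc geom_Suc algebra_simps)
qed

lemma one_plus_X_times_Pm: "(1 + monom 1 1) * Pm m = 1 + monom 1 m"
proof (induction m)
  case 0
  show ?case by (simp add: Pm_def)
next
  case (Suc m)
  have "Pm (Suc m) = Pm m + monom 1 m"
    by (simp add: Pm_def)
  then show ?case
    using Suc by (simp add: mult_monom algebra_simps)
qed

lemma Pm_Suc_shift: "Pm (Suc m) = 1 + monom 1 1 * Pm m"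
  using Pm_add[of 1 m] by (simp add: Pm_def)

definition Pm_inv :: "nat \<Rightarrow> bit poly" where
  "Pm_inv k = monom 1 1 * geom (2 * k + 1) k + monom 1 (k + 1) * geom (2 * k + 1) (k - 1)"

lemma twice_square_split: "0 < (k :: nat) \<Longrightarrow> 2 * k * k = (k + 1) + (2 * k + 1) * (k - 1)"
  by (cases k) (simp_all add: algebra_simps)

lemma Pm_twice_square_blocks:
  assumes "0 < k"
  shows "Pm (2 * k * k) = Pm (2 * k + 1) * monom 1 (k + 1) * geom (2 * k + 1) (k - 1) + Pm (k + 1)"
proof -
  have "Pm (2 * k * k) = Pm (k + 1) + monom 1 (k + 1) * Pm ((2 * k + 1) * (k - 1))"
    by (simp only: twice_square_split[OF assms] Pm_add)
  also have "\<dots> = Pm (k + 1) + monom 1 (k + 1) * (Pm (2 * k + 1) * geom (2 * k + 1) (k - 1))"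
    by (simp only: Pm_mult)
  finally show ?thesis
    by (simp only: ac_simps)
qed

lemma Pm_twice_square_via_Pm_inv:
  assumes "0 < k"
  shows "Pm (2 * k * k) = Pm_inv k * Pm k + geom (2 * k + 1) k"
proof -
  obtain j where k: "k = Suc j" using assms gr0_implies_Suc by blast
  define a where "a = 2 * k + 1"
  have Pm_a: "Pm (k + 1) + monom 1 (k + 1) * Pm k = Pm a"
    unfolding Pm_add[symmetric] a_def by (simp add: mult_2 add.commute add.left_commute)
  have geom_a_k: "geom a k = geom a j + monom 1 (a * j)"
    unfolding k geom_Suc by (simp add: mult.commute)
  have "Pm_inv k * Pm k + geom a k
      = (1 + monom 1 1 * Pm k) * geom a k + monom 1 (k + 1) * Pm k * geom a j"
    using k by (simp add: Pm_inv_def a_def algebra_simps)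
  also have "\<dots> = (Pm (k + 1) + monom 1 (k + 1) * Pm k) * geom a j + monom 1 (a * j) * Pm (k + 1)"
    unfolding Pm_Suc_shift[symmetric] geom_a_k by (simp add: algebra_simps)
  also have "\<dots> = Pm (a * j) + monom 1 (a * j) * Pm (k + 1)"
    unfolding Pm_a Pm_mult ..
  also have "\<dots> = Pm (2 * k * k)"
    unfolding Pm_add[symmetric] a_def twice_square_split[OF assms] k by (simp add: add.commute)
  finally show ?thesis
    by (simp only: a_def)
qed

lemma Pm_times_Pm_inv:
  assumes "0 < k"
  shows "Pm (2 * k + 1) * Pm_inv k = 1 + xn1 (2 * k * k) * Pm (k + 1)"
proof -
  define a n where "a = 2 * k + 1" and "n = 2 * k * k"
  have "Pm n = monom 1 (k + 1) * Pm (a * (k - 1)) + Pm (k + 1)"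
    unfolding Pm_mult[of a "k - 1"] using Pm_twice_square_blocks[OF assms]
    by (simp add: a_def n_def ac_simps)
  then have blocks: "monom 1 (k + 1) * Pm (a * (k - 1)) = Pm n + Pm (k + 1)"
    by simp
  have ak: "a * k = n + k"
    by (simp add: a_def n_def algebra_simps)
  have "Pm a * Pm_inv k = monom 1 1 * Pm (a * k) + monom 1 (k + 1) * Pm (a * (k - 1))"
    unfolding Pm_mult by (simp add: Pm_inv_def a_def algebra_simps)
  also have "\<dots> = monom 1 1 * Pm (n + k) + (Pm n + Pm (k + 1))"
    unfolding blocks ak ..
  also have "\<dots> = (1 + monom 1 1) * Pm n + monom 1 n * (monom 1 1 * Pm k) + Pm (k + 1)"
    unfolding Pm_add[of n k] by (simp add: mult_monom algebra_simps)
  also have "\<dots> = 1 + monom 1 n + monom 1 n * (Pm (k + 1) + 1) + Pm (k + 1)"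
    unfolding one_plus_X_times_Pm by (simp add: Pm_Suc_shift)
  also have "\<dots> = 1 + xn1 n * Pm (k + 1)"
    by (simp add: xn1_eq algebra_simps)
  finally show ?thesis
    by (simp add: a_def n_def)
qed

lemma coeff_sum_monom_one:
  "finite S \<Longrightarrow> coeff (\<Sum>e\<in>S. monom (1 :: bit) e) i = (if i \<in> S then 1 else 0)"
  by (simp add: coeff_sum coeff_monom)

lemma degree_xn1: "0 < n \<Longrightarrow> degree (xn1 n) = n"
  unfolding xn1_eq by (simp add: degree_add_eq_right degree_monom_eq)

lemma wt_sum_monom:
  assumes "finite S" and "\<And>e. e \<in> S \<Longrightarrow> e < n"
  shows "wt n (\<Sum>e\<in>S. monom 1 e) = card S"
proof (cases "n = 0")
  case True
  then have "S = {}"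
    using assms(2) by blast
  then show ?thesis
    by (simp add: wt_def)
next
  case False
  have "degree (\<Sum>e\<in>S. monom (1 :: bit) e) < degree (xn1 n)"
    using False assms(2) by (simp add: degree_xn1 degree_sum_less degree_monom_eq)
  then have "(\<Sum>e\<in>S. monom 1 e) mod xn1 n = (\<Sum>e\<in>S. monom 1 e)"
    by (rule mod_poly_less)
  then show ?thesis
    using assms(1) by (simp add: wt_def coeff_sum_monom_one)
qed

lemma monom_times_geom:
  assumes "0 < a"
  shows "monom 1 c * geom a k = (\<Sum>e\<in>(\<lambda>i. c + i * a) ` {..<k}. monom 1 e)"
proof -
  have "inj_on (\<lambda>i. c + i * a) {..<k}"
    using assms by (auto simp: inj_on_def)
  then show ?thesis
    by (simp add: geom_def sum_distrib_left mult_monom sum.reindex)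
qed

lemma wt_Pm_inv:
  assumes "0 < k"
  shows "wt (2 * k * k) (Pm_inv k) = 2 * k - 1"
proof -
  obtain j where k: "k = Suc j" using assms gr0_implies_Suc by blast
  define a where "a = 2 * k + 1"
  have a_pos: "0 < a"
    by (simp add: a_def)
  define S1 S2 where "S1 = (\<lambda>i. 1 + i * a) ` {..<k}" and "S2 = (\<lambda>i. (k + 1) + i * a) ` {..<j}"
  have inj: "inj_on (\<lambda>i. c + i * a) A" for c A
    by (auto simp: inj_on_def a_def simp del: mult_Suc_right)
  have residue: "(c + i * a) mod a = c" if "c < a" for c i
    using that by simp
  have "e mod a = 1" if "e \<in> S1" for e
    using that residue[of 1] assms by (auto simp: S1_def a_def)
  moreover have "e mod a = k + 1" if "e \<in> S2" for e
    using that residue[of "k + 1"] assms by (auto simp: S2_def a_def)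
  ultimately have disjoint: "S1 \<inter> S2 = {}"
    using assms by fastforce
  have "Pm_inv k = (\<Sum>e\<in>S1. monom 1 e) + (\<Sum>e\<in>S2. monom 1 e)"
    unfolding Pm_inv_def a_def[symmetric] monom_times_geom[OF a_pos] S1_def S2_def
    by (simp add: k)
  also have "\<dots> = (\<Sum>e\<in>S1 \<union> S2. monom 1 e)"
    using disjoint by (intro sum.union_disjoint[symmetric]) (simp_all add: S1_def S2_def)
  finally have Pm_inv_eq: "Pm_inv k = (\<Sum>e\<in>S1 \<union> S2. monom 1 e)" .
  have below_n: "e < 2 * k * k" if "e \<in> S1 \<union> S2" for e
  proof -
    have n: "2 * k * k = (k + 1) + j * a"
      using twice_square_split[OF assms] k by (simp add: a_def mult.commute)
    from that obtain i where "i < k \<and> e = 1 + i * a \<or> i < j \<and> e = (k + 1) + i * a"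
      by (auto simp: S1_def S2_def)
    then show ?thesis
    proof (elim disjE conjE)
      assume "i < k" "e = 1 + i * a"
      moreover have "i * a \<le> j * a"
        using \<open>i < k\<close> k by (intro mult_le_mono1) simp
      ultimately show ?thesis
        using n by linarith
    next
      assume "i < j" "e = (k + 1) + i * a"
      moreover have "(i + 1) * a \<le> j * a"
        using \<open>i < j\<close> by (intro mult_le_mono1) simp
      ultimately show ?thesis
        using n a_pos by (simp add: algebra_simps)
    qed
  qed
  have "card S1 = k" and "card S2 = j"
    unfolding S1_def S2_def by (simp_all only: card_image[OF inj] card_lessThan)
  then have "card (S1 \<union> S2) = 2 * k - 1"
    using disjoint k by (simp add: card_Un_disjoint S1_def S2_def)
  moreover have "finite (S1 \<union> S2)"
    by (simp add: S1_def S2_def)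
  ultimately show ?thesis
    unfolding Pm_inv_eq using wt_sum_monom[of "S1 \<union> S2", OF _ below_n] by simp
qed

theorem lemma3:
  fixes d n :: nat
  assumes "d > 0" and "even d" and "n = d^2 div 2"
  defines "Q \<equiv> monom 1 1 * geom (d + 1) (d div 2)
              + monom 1 (d div 2 + 1) * geom (d + 1) (d div 2 - 1)"
  shows "(\<exists>q. (Pm (d + 1) * q) mod xn1 n = 1 mod xn1 n)
    \<and> (Pm (d + 1) * Q) mod xn1 n = 1 mod xn1 n
    \<and> wt n Q = d - 1
    \<and> Pm n mod xn1 n = (Pm (d + 1) * monom 1 (d div 2 + 1) * geom (d + 1) (d div 2 - 1)
                         + Pm (d div 2 + 1)) mod xn1 n
    \<and> Pm n mod xn1 n = (Q * Pm (d div 2) + geom (d + 1) (d div 2)) mod xn1 n"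
proof -
  obtain k where d: "d = 2 * k"
    using \<open>even d\<close> by blast
  have k: "0 < k"
    using \<open>d > 0\<close> d by simp
  have n: "n = 2 * k * k"
    using \<open>n = d^2 div 2\<close> d by (simp add: power2_eq_square)
  have Q: "Q = Pm_inv k"
    by (simp add: Q_def Pm_inv_def d)
  have "(Pm (d + 1) * Q) mod xn1 n = 1 mod xn1 n"
    unfolding Q d n using Pm_times_Pm_inv[OF k] by simp
  moreover have "wt n Q = d - 1"
    using wt_Pm_inv[OF k] by (simp add: Q d n)
  moreover have "Pm n = Pm (d + 1) * monom 1 (d div 2 + 1) * geom (d + 1) (d div 2 - 1) + Pm (d div 2 + 1)"
    using Pm_twice_square_blocks[OF k] by (simp add: d n)
  moreover have "Pm n = Q * Pm (d div 2) + geom (d + 1) (d div 2)"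
    using Pm_twice_square_via_Pm_inv[OF k] by (simp add: Q d n)
  ultimately show ?thesis
    by auto
qed

end
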